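(* $F_{\{1,2\}}=\emptyset$, and $\overline{F}_{\{1,2\}}$ consists of a single point, namely $\overline{F}_{\{1,2\}}=F_{\{1,2,3,5,10,11\}}=\{p_2\}$, where $p_2$ is the unique fixed point of $G_2$ in $H^2_\mathbb{C}$.
   Context: Hermitian form on $\mathbb{C}^3$: $\langle V,W\rangle=V_1\overline{W_3}+V_2\overline{W_2}+V_3\overline{W_1}$. Let $$G_1=\begin{pmatrix}1&1&-\frac{1+i\sqrt7}{2}\\0&1&-1\\0&0&1\end{pmatrix},\quad G_3=\begin{pmatrix}1&0&0\\-1&1&0\\ \frac{-1+i\sqrt7}{2}&1&1\end{pmatrix},\quad G_2=G_3G_1^{-1}G_3^{-1}G_1,$$ $Q=(1,0,0)^T$. Set $\gamma_1=G_2,\gamma_2=G_2^{-1},\gamma_3=G_3,\gamma_4=G_3^{-1}$ and, for $k\ge1$ and $1\le j\le4$, $\gamma_{8k-4+j}=G_1^k\gamma_jG_1^{-k}$, $\gamma_{8k+j}=G_1^{-k}\gamma_jG_1^{k}$. For $Z\in\mathbb{C}^3\setminus\{0\}$ let $f_0(Z)=\langle Z,Z\rangle$ and $f_j(Z)=|\langle Z,Q\rangle|^2-|\langle Z,\gamma_jQ\rangle|^2$ for $j\ge1$ (homogeneous, so their signs are defined on $\mathbb{C}P^2$). Let $I=\{0,1,2,\dots\}$. For disjoint $J,K\subset I$, $F_{J,K}=\{[Z]\in\mathbb{C}P^2: f_j(Z)=0\ \forall j\in J,\ f_i(Z)<0\ \forall i\in K\}$, $\overline{F}_{J,K}$ is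 defined likewise with $f_i\le0$ for $i\in K$, $F_J=F_{J,I\setminus J}$ and $\overline{F}_J=\overline{F}_{J,I\setminus J}$. *)

theory Defs
  imports "HOL-Analysis.Analysis"
begin

type_synonym cvec = "complex ^ 3"
type_synonym cmat = "complex ^ 3 ^ 3"

definition herm :: "cvec \<Rightarrow> cvec \<Rightarrow> complex" where
  "herm V W = V$1 * cnj (W$3) + V$2 * cnj (W$2) + V$3 * cnj (W$1)"

definition G1 :: cmat where
  "G1 = vector [vector [1, 1, - (1 + \<i> * complex_of_real (sqrt 7)) / 2],
                vector [0, 1, -1],
                vector [0, 0, 1]]"

definition G3 :: cmat where
  "G3 = vector [vector [1, 0, 0],
                vector [-1, 1, 0],
                vector [(-1 + \<i> * complex_of_real (sqrt 7)) / 2, 1, 1]]"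

definition G2 :: cmat where
  "G2 = G3 ** matrix_inv G1 ** matrix_inv G3 ** G1"

definition Qv :: cvec where
  "Qv = vector [1, 0, 0]"

fun mpow :: "cmat \<Rightarrow> nat \<Rightarrow> cmat" where
  "mpow A 0 = mat 1"
| "mpow A (Suc k) = A ** mpow A k"

definition gbase :: "nat \<Rightarrow> cmat" where
  "gbase j = (if j = 1 then G2 else if j = 2 then matrix_inv G2
              else if j = 3 then G3 else matrix_inv G3)"

text \<open>gamma (n) for n >= 1: gamma 1..4 = G2, G2^-1, G3, G3^-1;
  gamma (8k-4+j) = G1^k gamma j G1^-k, gamma (8k+j) = G1^-k gamma j G1^k.\<close>
definition gamma :: "nat \<Rightarrow> cmat" where
  "gamma n = (let m = (n - 1) div 4; j = (n - 1) mod 4 + 1 in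
     if m = 0 then gbase j
     else if odd m then mpow G1 ((m + 1) div 2) ** gbase j ** matrix_inv (mpow G1 ((m + 1) div 2))
     else matrix_inv (mpow G1 (m div 2)) ** gbase j ** mpow G1 (m div 2))"

definition f :: "nat \<Rightarrow> cvec \<Rightarrow> real" where
  "f j Z = (if j = 0 then Re (herm Z Z)
            else (cmod (herm Z Qv))\<^sup>2 - (cmod (herm Z (gamma j *v Qv)))\<^sup>2)"

text \<open>points of CP^2 are complex lines (without 0) through nonzero vectors\<close>
definition proj :: "cvec \<Rightarrow> cvec set" where
  "proj Z = {c *s Z | c. c \<noteq> 0}"

definition FJK :: "nat set \<Rightarrow> nat set \<Rightarrow> cvec set set" where
  "FJK J K = {proj Z | Z. Z \<noteq> 0 \<and> (\<forall>j\<in>J. f j Z = 0) \<and> (\<forall>i\<in>K. f i Z < 0)}"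

definition FJK_bar :: "nat set \<Rightarrow> nat set \<Rightarrow> cvec set set" where
  "FJK_bar J K = {proj Z | Z. Z \<noteq> 0 \<and> (\<forall>j\<in>J. f j Z = 0) \<and> (\<forall>i\<in>K. f i Z \<le> 0)}"

definition FJ :: "nat set \<Rightarrow> cvec set set" where
  "FJ J = FJK J (UNIV - J)"

definition FJ_bar :: "nat set \<Rightarrow> cvec set set" where
  "FJ_bar J = FJK_bar J (UNIV - J)"

definition H2C :: "cvec set set" where
  "H2C = {proj Z | Z. Z \<noteq> 0 \<and> Re (herm Z Z) < 0}"

definition fixed_points_H2C :: "cmat \<Rightarrow> cvec set set" where
  "fixed_points_H2C A = {proj Z | Z. Z \<noteq> 0 \<and> Re (herm Z Z) < 0 \<and> proj (A *v Z) = proj Z}"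

end

theory Submission
  imports Defs
begin

text \<open>
  The vector \<open>p2 = (-2, 2 + w, 2)\<close>, where \<open>w = (-1 + i \<surd>7) / 2\<close>, spans the only negative
  line fixed by \<open>G2\<close>: the other eigenvalues of \<open>G2\<close> are \<open>\<plusminus>i\<close>, whose eigenvectors are not
  negative.

  Since \<open>G1\<close> fixes \<open>Q\<close>, each \<open>\<gamma>\<^sub>n Q\<close> equals \<open>G1\<^sup>k \<gamma>\<^sub>j Q\<close> for some \<open>j \<le> 4\<close> and
  integer \<open>k\<close>, and \<open>f\<^sub>n(p2)\<close> is minus a quartic polynomial in \<open>k\<close> that is non-negative
  on the integers and vanishes exactly for \<open>n \<in> {1, 2, 3, 5, 10, 11}\<close>.

  Conversely, normalise a line with \<open>f\<^sub>1 = f\<^sub>2 = 0\<close> as \<open>(z\<^sub>1, z\<^sub>2, 1)\<close>. Then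
  \<open>-z\<^sub>1\<close> and \<open>-z\<^sub>1 + (w - 1) z\<^sub>2 + 2\<close> are unimodular, so they can be written \<open>\<zeta>\<^sup>2\<close> and
  \<open>\<zeta> \<eta>\<close> with \<open>|\<zeta>| = |\<eta>| = 1\<close> and \<open>Re \<zeta> \<ge> 0\<close>. In the coordinates of \<open>\<zeta>\<close> and \<open>\<eta>\<close> the
  functions \<open>f\<^sub>0\<close>, \<open>f\<^sub>3\<close>, \<open>f\<^sub>1\<^sub>0\<close> become quadratic, and an elementary inequality shows that
  \<open>f\<^sub>0, f\<^sub>3, f\<^sub>1\<^sub>0 \<le> 0\<close> forces \<open>\<zeta> = \<eta> = 1\<close>, the line of \<open>p2\<close>. So the closed set for
  \<open>{1, 2}\<close> contains only \<open>p2\<close>, and the open one is empty because \<open>f\<^sub>3(p2) = 0\<close>.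
\<close>

section \<open>The number \<open>w\<close> and explicit \<open>3 \<times> 3\<close> matrices\<close>

definition w :: complex where
  "w = (-1 + \<i> * complex_of_real (sqrt 7)) / 2"

lemma Re_w [simp]: "Re w = -1/2" and Im_w [simp]: "Im w = sqrt 7 / 2"
  by (simp_all add: w_def)

lemma w_squared: "w * w = - w - 2"
  by (simp add: complex_eq_iff)

lemma cnj_w: "cnj w = - 1 - w"
  by (simp add: complex_eq_iff)

lemma w_neq_1: "w \<noteq> 1"
  by (simp add: complex_eq_iff)

definition mat3 :: "complex \<Rightarrow> complex \<Rightarrow> complex \<Rightarrow> complex \<Rightarrow> complex \<Rightarrow> complex \<Rightarrow>
    complex \<Rightarrow> complex \<Rightarrow> complex \<Rightarrow> cmat" where
  "mat3 a1 a2 a3 b1 b2 b3 c1 c2 c3 =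
     vector [vector [a1, a2, a3], vector [b1, b2, b3], vector [c1, c2, c3]]"

lemma mat3_mult:
  "mat3 a1 a2 a3 b1 b2 b3 c1 c2 c3 ** mat3 x1 x2 x3 y1 y2 y3 z1 z2 z3 =
   mat3 (a1*x1 + a2*y1 + a3*z1) (a1*x2 + a2*y2 + a3*z2) (a1*x3 + a2*y3 + a3*z3)
        (b1*x1 + b2*y1 + b3*z1) (b1*x2 + b2*y2 + b3*z2) (b1*x3 + b2*y3 + b3*z3)
        (c1*x1 + c2*y1 + c3*z1) (c1*x2 + c2*y2 + c3*z2) (c1*x3 + c2*y3 + c3*z3)"
  unfolding mat3_def by (simp add: matrix_matrix_mult_def vec_eq_iff forall_3 sum_3)

lemma mat3_mult_vector:
  "mat3 a1 a2 a3 b1 b2 b3 c1 c2 c3 *v vector [x, y, z] =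
   (vector [a1*x + a2*y + a3*z, b1*x + b2*y + b3*z, c1*x + c2*y + c3*z] :: cvec)"
  unfolding mat3_def by (simp add: matrix_vector_mult_def vec_eq_iff forall_3 sum_3)

lemma mat3_eq_iff:
  "mat3 a1 a2 a3 b1 b2 b3 c1 c2 c3 = mat3 x1 x2 x3 y1 y2 y3 z1 z2 z3 \<longleftrightarrow>
   a1 = x1 \<and> a2 = x2 \<and> a3 = x3 \<and> b1 = y1 \<and> b2 = y2 \<and> b3 = y3 \<and> c1 = z1 \<and> c2 = z2 \<and> c3 = z3"
  unfolding mat3_def by (simp add: vec_eq_iff forall_3)

lemma mat3_one: "(mat 1 :: cmat) = mat3 1 0 0 0 1 0 0 0 1"
  unfolding mat3_def by (simp add: mat_def vec_eq_iff forall_3)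

lemma vector3_eq_iff: "(vector [a, b, c] :: cvec) = vector [a', b', c'] \<longleftrightarrow> a = a' \<and> b = b' \<and> c = c'"
  by (simp add: vec_eq_iff forall_3)

lemma vector3_eq_0_iff: "(vector [a, b, c] :: cvec) = 0 \<longleftrightarrow> a = 0 \<and> b = 0 \<and> c = 0"
  by (simp add: vec_eq_iff forall_3)

lemma vector3_expand: "(Z :: cvec) = vector [Z$1, Z$2, Z$3]"
  by (simp add: vec_eq_iff forall_3)

lemma scalar_mult_vector3: "(k :: complex) *s vector [a, b, c] = (vector [k*a, k*b, k*c] :: cvec)"
  by (simp add: vec_eq_iff forall_3)

lemma herm_vector3: "herm (vector [a, b, c]) (vector [x, y, z]) = a * cnj z + b * cnj y + c * cnj x"
  by (simp add: herm_def)

lemma matrix_inv_unique: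
  fixes A B :: "'a::semiring_1^'n^'n"
  assumes "A ** B = mat 1" "B ** A = mat 1"
  shows "matrix_inv A = B"
proof -
  have "\<exists>A'. A ** A' = mat 1 \<and> A' ** A = mat 1" using assms by blast
  then have inv: "A ** matrix_inv A = mat 1" "matrix_inv A ** A = mat 1"
    unfolding matrix_inv_def by (metis (mono_tags, lifting) someI_ex)+
  have "matrix_inv A = matrix_inv A ** (A ** B)" using assms by simp
  also have "\<dots> = B" using inv by (simp add: matrix_mul_assoc)
  finally show ?thesis .
qed

section \<open>The generators and the vectors \<open>\<gamma>\<^sub>n Q\<close>\<close>

lemma G3_eq: "G3 = mat3 1 0 0 (-1) 1 0 w 1 1"
  unfolding G3_def mat3_def w_def by simp

lemma G3_inv: "matrix_inv G3 = mat3 1 0 0 1 1 0 (-1-w) (-1) 1"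
  by (rule matrix_inv_unique) (simp_all add: G3_eq mat3_mult mat3_one mat3_eq_iff)

text \<open>A one-parameter group of Heisenberg translations fixing \<open>Q\<close> and containing
  \<open>G1 = heis_trans 1\<close>; it turns the inverse powers of \<open>G1\<close> in \<open>gamma\<close> into translations.\<close>

definition heis_trans :: "complex \<Rightarrow> cmat" where
  "heis_trans t = mat3 1 t (- t * (1 + w) - t * (t - 1) / 2) 0 1 (- t) 0 0 1"

lemma heis_trans_add: "heis_trans s ** heis_trans t = heis_trans (s + t)"
  unfolding heis_trans_def by (simp add: mat3_mult mat3_eq_iff field_simps)

lemma heis_trans_0: "heis_trans 0 = mat 1"
  by (simp add: heis_trans_def mat3_one)

lemma G1_eq: "G1 = heis_trans 1"
  unfolding G1_def heis_trans_def mat3_def w_def by (simp add: vector3_eq_iff field_simps)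

lemma matrix_inv_heis_trans: "matrix_inv (heis_trans t) = heis_trans (- t)"
  by (rule matrix_inv_unique) (simp_all add: heis_trans_add heis_trans_0)

lemma mpow_G1: "mpow G1 k = heis_trans (of_nat k)"
  by (induction k) (simp_all add: heis_trans_0 G1_eq heis_trans_add add.commute)

lemma heis_trans_Qv: "heis_trans t *v Qv = Qv"
  by (simp add: heis_trans_def Qv_def mat3_mult_vector)

lemma G2_eq: "G2 = mat3 2 (1-w) (-1) (-2-w) (-1) 0 (-1) 0 0"
  unfolding G2_def G1_eq matrix_inv_heis_trans G3_inv
  by (simp add: G3_eq heis_trans_def mat3_mult mat3_eq_iff) (use w_squared in algebra)

lemma G2_inv: "matrix_inv G2 = mat3 0 0 (-1) 0 (-1) (2+w) (-1) (w-1) 2"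
  by (rule matrix_inv_unique)
    (simp_all add: G2_eq mat3_mult mat3_one mat3_eq_iff, (use w_squared in algebra)+)

lemma gbase_Qv:
  "gbase 1 *v Qv = vector [2, -2-w, -1]" "gbase 2 *v Qv = vector [0, 0, -1]"
  "gbase 3 *v Qv = vector [1, -1, w]" "gbase 4 *v Qv = vector [1, 1, -1-w]"
  by (simp_all add: gbase_def G2_inv G3_inv, simp_all add: G2_eq G3_eq Qv_def mat3_mult_vector)

text \<open>\<open>gamma n = G1\<^sup>k ** gbase j ** G1\<^sup>-\<^sup>k\<close> with \<open>k = gamma_shift n\<close> and \<open>j = (n - 1) mod 4 + 1\<close>.\<close>

definition gamma_shift :: "nat \<Rightarrow> int" where
  "gamma_shift n = (let m = (n - 1) div 4 in if odd m then int ((m + 1) div 2) else - int (m div 2))"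

lemma gamma_Qv:
  "gamma n *v Qv = heis_trans (of_int (gamma_shift n)) *v (gbase ((n - 1) mod 4 + 1) *v Qv)"
  unfolding gamma_def gamma_shift_def Let_def mpow_G1 matrix_inv_heis_trans
  by (simp add: matrix_vector_mul_assoc[symmetric] heis_trans_Qv heis_trans_0
      del: mpow.simps)

lemma gamma_Qv_1_2_3_10:
  "gamma 1 *v Qv = vector [2, -2-w, -1]" "gamma 2 *v Qv = vector [0, 0, -1]"
  "gamma 3 *v Qv = vector [1, -1, w]" "gamma 10 *v Qv = vector [-w, -1, -1]"
proof -
  have "gamma 1 *v Qv = gbase 1 *v Qv" "gamma 2 *v Qv = gbase 2 *v Qv" "gamma 3 *v Qv = gbase 3 *v Qv"
    "gamma 10 *v Qv = heis_trans (-1) *v (gbase 2 *v Qv)"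
    using gamma_Qv[of 1] gamma_Qv[of 2] gamma_Qv[of 3] gamma_Qv[of 10]
    by (simp_all add: gamma_shift_def heis_trans_0 numeral_2_eq_2 numeral_3_eq_3)
  then show "gamma 1 *v Qv = vector [2, -2-w, -1]" "gamma 2 *v Qv = vector [0, 0, -1]"
    "gamma 3 *v Qv = vector [1, -1, w]" "gamma 10 *v Qv = vector [-w, -1, -1]"
    unfolding gbase_Qv by (simp_all add: heis_trans_def mat3_mult_vector)
qed

lemma abs_gamma_shift_ge_2:
  assumes "12 < n"
  shows "2 \<le> \<bar>gamma_shift n\<bar>"
proof -
  have "3 \<le> (n - 1) div 4" using assms by (simp add: less_eq_div_iff_mult_less_eq)
  then show ?thesis
    unfolding gamma_shift_def Let_def by (auto elim!: oddE evenE)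
qed

section \<open>Points of \<open>\<complex>P\<^sup>2\<close> and the functions \<open>f\<^sub>j\<close>\<close>

lemma herm_scalar_left: "herm (c *s Z) W = c * herm Z W"
  by (simp add: herm_def algebra_simps)

lemma herm_scalar_right: "herm Z (c *s W) = cnj c * herm Z W"
  by (simp add: herm_def algebra_simps)

lemma f_scalar: "f j (c *s Z) = (cmod c)\<^sup>2 * f j Z"
proof (cases "j = 0")
  case True
  have "c * cnj c = complex_of_real ((cmod c)\<^sup>2)"
    by (rule complex_norm_square[symmetric])
  moreover have "herm (c *s Z) (c *s Z) = (c * cnj c) * herm Z Z"
    by (simp add: herm_scalar_left herm_scalar_right mult.assoc)
  ultimately show ?thesis using True by (simp add: f_def)
qed (simp add: f_def herm_scalar_left norm_mult power_mult_distrib algebra_simps)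

lemma proj_scalar:
  assumes "c \<noteq> 0"
  shows "proj (c *s Z) = proj Z"
proof (intro set_eqI iffI)
  fix X assume "X \<in> proj (c *s Z)"
  then obtain d where "d \<noteq> 0" "X = (d * c) *s Z" unfolding proj_def by (auto simp: vector_smult_assoc)
  then show "X \<in> proj Z" unfolding proj_def using assms by auto
next
  fix X assume "X \<in> proj Z"
  then obtain d where "d \<noteq> 0" "X = (d / c) *s (c *s Z)" unfolding proj_def using assms
    by (auto simp: vector_smult_assoc)
  then show "X \<in> proj (c *s Z)" unfolding proj_def using assms by (auto intro!: exI[of _ "d / c"])
qed

lemma proj_eqD: "proj Z = proj W \<Longrightarrow> \<exists>c. c \<noteq> 0 \<and> W = c *s Z"
proof -
  assume "proj Z = proj W"
  moreover have "W \<in> proj W" unfolding proj_def by (auto intro: exI[of _ 1])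
  ultimately have "W \<in> proj Z" by simp
  then show ?thesis unfolding proj_def by blast
qed

lemma f_vector3:
  "f 0 (vector [a, b, c]) = Re (a * cnj c + b * cnj b + c * cnj a)"
  "f 1 (vector [a, b, c]) = (cmod c)\<^sup>2 - (cmod (- a + (w - 1) * b + 2 * c))\<^sup>2"
  "f 2 (vector [a, b, c]) = (cmod c)\<^sup>2 - (cmod a)\<^sup>2"
  "f 3 (vector [a, b, c]) = (cmod c)\<^sup>2 - (cmod (a * (- 1 - w) - b + c))\<^sup>2"
  "f 10 (vector [a, b, c]) = (cmod c)\<^sup>2 - (cmod (- a - b + (1 + w) * c))\<^sup>2"
  by (simp_all only: f_def gamma_Qv_1_2_3_10) (simp_all add: herm_vector3 Qv_def cnj_w algebra_simps)

definition p2_vec :: cvec where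
  "p2_vec = vector [-2, 2 + w, 2]"

lemma p2_vec_nonzero: "p2_vec \<noteq> 0"
  by (simp add: p2_vec_def vector3_eq_0_iff)

lemma herm_p2_vec: "herm p2_vec (vector [x, y, z]) = - 2 * cnj z + (2 + w) * cnj y + 2 * cnj x"
  by (simp add: p2_vec_def herm_vector3)

lemma f0_p2_vec: "f 0 p2_vec = -4"
proof -
  have "cnj (2 + w) * (2 + w) = 4" by (simp add: cnj_w) (use w_squared in algebra)
  then show ?thesis by (simp add: f_def p2_vec_def herm_vector3 mult.commute)
qed

lemma G2_p2_vec: "G2 *v p2_vec = p2_vec"
  unfolding p2_vec_def G2_eq mat3_mult_vector vector3_eq_iff by (use w_squared in algebra)

definition p2_defect :: "nat \<Rightarrow> real \<Rightarrow> real" where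
  "p2_defect j t =
    (if j = 0 then t * (t - 1) * (t\<^sup>2 - 2 * t + 6)
     else if j = 1 then t * (t + 1) * (t\<^sup>2 + 2 * t + 6)
     else if j = 2 then t * (t + 1) * (2 * t\<^sup>2 + 2 * t + 5)
     else 2 * ((t\<^sup>2 + 2 * t)\<^sup>2 + 4 * (t + 1)\<^sup>2 + 5))"

lemma p2_defect_gbase:
  fixes t :: real
  assumes "j < 4"
  shows "(cmod (herm p2_vec (heis_trans (of_real t) *v (gbase (j + 1) *v Qv))))\<^sup>2 = 4 + p2_defect j t"
proof -
  have "j = 0 \<or> j = 1 \<or> j = 2 \<or> j = 3" using assms by arith
  moreover have "(cmod (herm p2_vec (heis_trans (of_real t) *v (gbase 1 *v Qv))))\<^sup>2 = 4 + p2_defect 0 t"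
    unfolding gbase_Qv heis_trans_def mat3_mult_vector herm_p2_vec cmod_power2
    by (simp add: p2_defect_def power2_eq_square field_simps)
  moreover have "(cmod (herm p2_vec (heis_trans (of_real t) *v (gbase 2 *v Qv))))\<^sup>2 = 4 + p2_defect 1 t"
    unfolding gbase_Qv heis_trans_def mat3_mult_vector herm_p2_vec cmod_power2
    by (simp add: p2_defect_def power2_eq_square field_simps)
  moreover have "(cmod (herm p2_vec (heis_trans (of_real t) *v (gbase 3 *v Qv))))\<^sup>2 = 4 + p2_defect 2 t"
    unfolding gbase_Qv heis_trans_def mat3_mult_vector herm_p2_vec cmod_power2
    by (simp add: p2_defect_def power2_eq_square field_simps)
  moreover have "(cmod (herm p2_vec (heis_trans (of_real t) *v (gbase 4 *v Qv))))\<^sup>2 = 4 + p2_defect 3 t"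
    unfolding gbase_Qv heis_trans_def mat3_mult_vector herm_p2_vec cmod_power2
    by (simp add: p2_defect_def power2_eq_square field_simps)
  ultimately show ?thesis by (auto simp: eval_nat_numeral)
qed

lemma f_p2_vec: "n \<noteq> 0 \<Longrightarrow> f n p2_vec = - p2_defect ((n - 1) mod 4) (of_int (gamma_shift n))"
  using p2_defect_gbase[of "(n - 1) mod 4" "of_int (gamma_shift n)"]
  by (simp add: f_def gamma_Qv herm_p2_vec[of 1 0 0, folded Qv_def])

lemma of_int_mult_succ_ge_0: "0 \<le> (of_int t :: real) * (of_int t + 1)"
  by (cases "0 \<le> t") (simp_all add: zero_le_mult_iff)

lemma p2_defect_factors_pos:
  fixes x :: real
  shows "0 < x\<^sup>2 - 2 * x + 6" "0 < x\<^sup>2 + 2 * x + 6" "0 < 2 * x\<^sup>2 + 2 * x + 5"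
    "0 < 2 * ((x\<^sup>2 + 2 * x)\<^sup>2 + 4 * (x + 1)\<^sup>2 + 5)"
proof -
  have "x\<^sup>2 - 2 * x + 6 = (x - 1)\<^sup>2 + 5" "x\<^sup>2 + 2 * x + 6 = (x + 1)\<^sup>2 + 5"
    "2 * (2 * x\<^sup>2 + 2 * x + 5) = (2 * x + 1)\<^sup>2 + 9"
    by algebra+
  then show "0 < x\<^sup>2 - 2 * x + 6" "0 < x\<^sup>2 + 2 * x + 6" "0 < 2 * x\<^sup>2 + 2 * x + 5"
    using zero_le_power2[of "x - 1"] zero_le_power2[of "x + 1"] zero_le_power2[of "2 * x + 1"]
    by linarith+
  show "0 < 2 * ((x\<^sup>2 + 2 * x)\<^sup>2 + 4 * (x + 1)\<^sup>2 + 5)"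
    by (simp add: add_nonneg_pos)
qed

lemma p2_defect_int_ge_0: "0 \<le> p2_defect j (of_int t)"
proof -
  define x where "x = (of_int t :: real)"
  have "0 \<le> x * (x + 1)" "0 \<le> x * (x - 1)"
    using of_int_mult_succ_ge_0[of t] of_int_mult_succ_ge_0[of "t - 1"]
    by (simp_all add: x_def algebra_simps)
  then show ?thesis
    unfolding p2_defect_def x_def[symmetric]
    using p2_defect_factors_pos[of x] by (auto intro!: mult_nonneg_nonneg)
qed

lemma p2_defect_int_eq_0_iff:
  assumes "j < 4"
  shows "p2_defect j (of_int t) = 0 \<longleftrightarrow> (j = 0 \<and> t \<in> {0, 1}) \<or> (j \<in> {1, 2} \<and> t \<in> {0, -1})"
proof -
  define x where "x = (of_int t :: real)"
  have "x * (x - 1) = 0 \<longleftrightarrow> t \<in> {0, 1}" "x * (x + 1) = 0 \<longleftrightarrow> t \<in> {0, -1}"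
    by (auto simp: x_def)
  moreover have "j = 0 \<or> j = 1 \<or> j = 2 \<or> j = 3" using assms by arith
  ultimately show ?thesis
    unfolding p2_defect_def x_def[symmetric] using p2_defect_factors_pos[of x] by auto
qed

lemma f_p2_vec_le_0: "f n p2_vec \<le> 0"
  by (cases "n = 0") (simp_all add: f0_p2_vec f_p2_vec p2_defect_int_ge_0)

lemma f_p2_vec_eq_0_iff: "f n p2_vec = 0 \<longleftrightarrow> n \<in> {1, 2, 3, 5, 10, 11}"
proof (cases "n = 0")
  case False
  have zero_iff: "f n p2_vec = 0 \<longleftrightarrow> ((n - 1) mod 4 = 0 \<and> gamma_shift n \<in> {0, 1})
      \<or> ((n - 1) mod 4 \<in> {1, 2} \<and> gamma_shift n \<in> {0, -1})"
    unfolding f_p2_vec[OF False] by (simp add: p2_defect_int_eq_0_iff)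
  show ?thesis
  proof (cases "12 < n")
    case True
    then show ?thesis using zero_iff abs_gamma_shift_ge_2 by fastforce
  next
    case False
    then have "n = 1 \<or> n = 2 \<or> n = 3 \<or> n = 4 \<or> n = 5 \<or> n = 6 \<or> n = 7 \<or> n = 8 \<or> n = 9 \<or>
        n = 10 \<or> n = 11 \<or> n = 12"
      using \<open>n \<noteq> 0\<close> by presburger
    then show ?thesis unfolding zero_iff by (elim disjE) (simp_all add: gamma_shift_def)
  qed
qed (simp add: f0_p2_vec)

section \<open>Uniqueness on the intersection of the bisectors \<open>f\<^sub>1 = 0\<close> and \<open>f\<^sub>2 = 0\<close>\<close>

text \<open>The hypothesis forces \<open>s\<^sup>2 \<le> 3/8\<close> and \<open>c k \<ge> (1 + 4s\<^sup>2 - s)/3 > 0\<close>; squaring the negated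
  conclusion then gives \<open>59 s\<^sup>2 + 112 s \<ge> 112\<close>, which fails for \<open>s < 5/8\<close>.\<close>

lemma unit_pair_sin_bound:
  fixes c s k \<sigma> :: real
  assumes circ: "c\<^sup>2 + s\<^sup>2 = 1" "k\<^sup>2 + \<sigma>\<^sup>2 = 1"
    and "0 \<le> c" "0 < s"
    and G: "1 + 4 * s\<^sup>2 + s * \<sigma> \<le> 3 * (c * k)"
  shows "13 * s < 2 * sqrt 7 * (c + k)"
proof (rule ccontr)
  assume "\<not> ?thesis"
  then have le: "2 * sqrt 7 * (c + k) \<le> 13 * s" by simp
  have "2 * (c * k) = 2 - (c - k)\<^sup>2 - s\<^sup>2 - \<sigma>\<^sup>2"
    using circ by algebra
  moreover have "(3 * \<sigma> + s)\<^sup>2 = 9 * \<sigma>\<^sup>2 + 6 * (s * \<sigma>) + s\<^sup>2"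
    by algebra
  moreover have "0 \<le> (c - k)\<^sup>2" "0 \<le> (3 * \<sigma> + s)\<^sup>2" by simp_all
  ultimately have s_sq: "8 * s\<^sup>2 \<le> 3"
    using G by linarith
  have "s < 5/8"
  proof (rule ccontr)
    assume "\<not> s < 5/8"
    then have "(5/8)\<^sup>2 \<le> s\<^sup>2" by (intro power_mono) auto
    then show False using s_sq by (simp add: power_divide)
  qed
  have "\<bar>\<sigma>\<bar> \<le> 1"
    using circ(2) zero_le_power2[of k] abs_square_le_1[of \<sigma>] by linarith
  then have "- s \<le> s * \<sigma>"
    using mult_left_mono[of "-1" \<sigma> s] \<open>0 < s\<close> by simp
  then have ck: "1 + 4 * s\<^sup>2 - s \<le> 3 * (c * k)" using G by linarith
  moreover have "0 < 1 + 4 * s\<^sup>2 - s" using \<open>s < 5/8\<close> zero_le_power2[of s] by linarith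
  ultimately have "0 < c * k" by linarith
  then have "0 < c" "0 < k" using \<open>0 \<le> c\<close> by (auto simp: zero_less_mult_iff)
  then have "(2 * sqrt 7 * (c + k))\<^sup>2 \<le> (13 * s)\<^sup>2"
    using le by (intro power_mono) auto
  then have "28 * (c + k)\<^sup>2 \<le> 169 * s\<^sup>2"
    by (simp add: power_mult_distrib)
  moreover have "(c + k)\<^sup>2 = 4 * (c * k) + (c - k)\<^sup>2"
    by algebra
  ultimately have "112 + 448 * s\<^sup>2 - 112 * s \<le> 507 * s\<^sup>2"
    using ck zero_le_power2[of "c - k"] by linarith
  then show False using \<open>s < 5/8\<close> s_sq by linarith
qed

text \<open>For \<open>\<zeta> = c + i s\<close> and \<open>\<eta> = k + i \<sigma>\<close> the three inequalities say
  \<open>f\<^sub>0, f\<^sub>3, f\<^sub>1\<^sub>0 \<le> 0\<close> at \<open>torus_point \<zeta> \<eta>\<close>, see \<open>f_torus_point\<close>.\<close>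

lemma unit_pair_constraints_imp_base:
  fixes c s k \<sigma> :: real
  assumes circ: "c\<^sup>2 + s\<^sup>2 = 1" "k\<^sup>2 + \<sigma>\<^sup>2 = 1" and "0 \<le> c"
    and G: "1 + 4 * s\<^sup>2 + s * \<sigma> \<le> 3 * (c * k)"
    and HA: "2 * sqrt 7 * s * (c + k) + (c - k)\<^sup>2 + (\<sigma> - 2 * s)\<^sup>2 \<le> 13 * s\<^sup>2"
    and HB: "(c - k)\<^sup>2 + \<sigma>\<^sup>2 \<le> 5 * s\<^sup>2 + 2 * sqrt 7 * s * (c + k)"
  shows "c = 1 \<and> s = 0 \<and> k = 1 \<and> \<sigma> = 0"
proof -
  have "\<not> 0 < s"
  proof
    assume "0 < s"
    then have "s * (13 * s) < s * (2 * sqrt 7 * (c + k))"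
      using unit_pair_sin_bound[OF circ \<open>0 \<le> c\<close> \<open>0 < s\<close> G] by (rule mult_strict_left_mono[rotated])
    then have "13 * s\<^sup>2 < 2 * sqrt 7 * s * (c + k)" by (simp add: power2_eq_square algebra_simps)
    then show False using HA zero_le_power2[of "c - k"] zero_le_power2[of "\<sigma> - 2 * s"] by linarith
  qed
  moreover have "\<not> s < 0"
  proof
    assume "s < 0"
    have "c\<^sup>2 + (- s)\<^sup>2 = 1" "k\<^sup>2 + (- \<sigma>)\<^sup>2 = 1" "1 + 4 * (- s)\<^sup>2 + (- s) * (- \<sigma>) \<le> 3 * (c * k)"
      using circ G by simp_all
    then have "13 * (- s) < 2 * sqrt 7 * (c + k)"
      using \<open>0 \<le> c\<close> \<open>s < 0\<close> by (intro unit_pair_sin_bound[of c "- s" k "- \<sigma>"]) simp_all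
    then have "(- s) * (13 * (- s)) < (- s) * (2 * sqrt 7 * (c + k))"
      using \<open>s < 0\<close> by (intro mult_strict_left_mono) simp_all
    then have "2 * sqrt 7 * s * (c + k) < - 13 * s\<^sup>2" by (simp add: power2_eq_square algebra_simps)
    then show False using HB zero_le_power2[of "c - k"] zero_le_power2[of \<sigma>] zero_le_power2[of s] by linarith
  qed
  ultimately have s: "s = 0" by linarith
  then have "c = 1" using circ(1) \<open>0 \<le> c\<close> by (auto simp: power2_eq_1_iff)
  moreover have "(c - k)\<^sup>2 + \<sigma>\<^sup>2 \<le> 0"
    using HA s by simp
  ultimately show ?thesis using s by (simp add: sum_power2_le_zero_iff)
qed

text \<open>For \<open>Z = (z\<^sub>1, z\<^sub>2, 1)\<close>, \<open>f\<^sub>2 = 0\<close> and \<open>f\<^sub>1 = 0\<close> say that \<open>-z\<^sub>1 = \<zeta>\<^sup>2\<close> and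
  \<open>-z\<^sub>1 + (w - 1) z\<^sub>2 + 2 = \<zeta>\<eta>\<close> are unimodular; the square root \<open>\<zeta>\<close> is what makes \<open>f\<^sub>0\<close>,
  \<open>f\<^sub>3\<close>, \<open>f\<^sub>1\<^sub>0\<close> quadratic.\<close>

definition torus_point :: "complex \<Rightarrow> complex \<Rightarrow> cvec" where
  "torus_point \<zeta> \<eta> = vector [- \<zeta>\<^sup>2, (\<zeta> * \<eta> - \<zeta>\<^sup>2 - 2) / (w - 1), 1]"

lemma cmod_w_minus_1: "cmod (w - 1) = 2"
  by (simp add: cmod_def power2_eq_square)

lemma f_torus_point:
  assumes "cmod \<zeta> = 1" "cmod \<eta> = 1"
  defines "c \<equiv> Re \<zeta>" and "s \<equiv> Im \<zeta>" and "k \<equiv> Re \<eta>" and "\<sigma> \<equiv> Im \<eta>"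
  shows "f 1 (torus_point \<zeta> \<eta>) = 0" "f 2 (torus_point \<zeta> \<eta>) = 0"
    "f 0 (torus_point \<zeta> \<eta>) = (1 + 4 * s\<^sup>2 + s * \<sigma> - 3 * (c * k)) / 2"
    "f 3 (torus_point \<zeta> \<eta>) = (2 * sqrt 7 * s * (c + k) + (c - k)\<^sup>2 + (\<sigma> - 2 * s)\<^sup>2 - 13 * s\<^sup>2) / 4"
    "f 10 (torus_point \<zeta> \<eta>) = ((c - k)\<^sup>2 + \<sigma>\<^sup>2 - 5 * s\<^sup>2 - 2 * sqrt 7 * s * (c + k)) / 4"
proof -
  have circ: "c\<^sup>2 + s\<^sup>2 = 1" "k\<^sup>2 + \<sigma>\<^sup>2 = 1"
    using assms(1,2) unfolding c_def s_def k_def \<sigma>_def by (simp_all flip: cmod_power2)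
  have w1: "w - 1 \<noteq> 0" using w_neq_1 by simp
  have "- (- \<zeta>\<^sup>2) + (w - 1) * ((\<zeta> * \<eta> - \<zeta>\<^sup>2 - 2) / (w - 1)) + 2 = \<zeta> * \<eta>"
    using w1 by simp
  then show "f 1 (torus_point \<zeta> \<eta>) = 0" "f 2 (torus_point \<zeta> \<eta>) = 0"
    unfolding torus_point_def f_vector3 using assms(1,2) by (simp_all add: norm_mult norm_power)
  have a3: "- \<zeta>\<^sup>2 * (- 1 - w) - (\<zeta> * \<eta> - \<zeta>\<^sup>2 - 2) / (w - 1) + 1
      = - ((w + 2) * \<zeta>\<^sup>2 + \<zeta> * \<eta> - (w + 1)) / (w - 1)"
    using w1 by (simp add: field_simps) (use w_squared in algebra)
  have a10: "- (- \<zeta>\<^sup>2) - (\<zeta> * \<eta> - \<zeta>\<^sup>2 - 2) / (w - 1) + (1 + w) * 1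
      = (w * \<zeta>\<^sup>2 - \<zeta> * \<eta> - (w + 1)) / (w - 1)"
    using w1 by (simp add: field_simps) (use w_squared in algebra)
  have a0: "Re (- \<zeta>\<^sup>2 * cnj 1 + b * cnj b + 1 * cnj (- \<zeta>\<^sup>2)) = - 2 * Re (\<zeta>\<^sup>2) + (cmod b)\<^sup>2" for b
    unfolding cmod_power2 by (simp add: power2_eq_square)
  have "- 2 * Re (\<zeta>\<^sup>2) + (cmod (\<zeta> * \<eta> - \<zeta>\<^sup>2 - 2))\<^sup>2 / 4 = (1 + 4 * s\<^sup>2 + s * \<sigma> - 3 * (c * k)) / 2"
    using circ unfolding c_def s_def k_def \<sigma>_def cmod_power2 by (simp add: power2_eq_square algebra_simps) algebra
  then show "f 0 (torus_point \<zeta> \<eta>) = (1 + 4 * s\<^sup>2 + s * \<sigma> - 3 * (c * k)) / 2"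
    unfolding torus_point_def f_vector3 a0 norm_divide cmod_w_minus_1 power_divide by simp
  have "1 - (cmod ((w + 2) * \<zeta>\<^sup>2 + \<zeta> * \<eta> - (w + 1)))\<^sup>2 / 4
      = (2 * sqrt 7 * s * (c + k) + (c - k)\<^sup>2 + (\<sigma> - 2 * s)\<^sup>2 - 13 * s\<^sup>2) / 4"
    using circ unfolding c_def s_def k_def \<sigma>_def cmod_power2 by (simp add: power2_eq_square algebra_simps) algebra
  then show "f 3 (torus_point \<zeta> \<eta>) = (2 * sqrt 7 * s * (c + k) + (c - k)\<^sup>2 + (\<sigma> - 2 * s)\<^sup>2 - 13 * s\<^sup>2) / 4"
    unfolding torus_point_def f_vector3 a3 norm_divide norm_minus_cancel cmod_w_minus_1 power_divide by simp
  have "1 - (cmod (w * \<zeta>\<^sup>2 - \<zeta> * \<eta> - (w + 1)))\<^sup>2 / 4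
      = ((c - k)\<^sup>2 + \<sigma>\<^sup>2 - 5 * s\<^sup>2 - 2 * sqrt 7 * s * (c + k)) / 4"
    using circ unfolding c_def s_def k_def \<sigma>_def cmod_power2 by (simp add: power2_eq_square algebra_simps) algebra
  then show "f 10 (torus_point \<zeta> \<eta>) = ((c - k)\<^sup>2 + \<sigma>\<^sup>2 - 5 * s\<^sup>2 - 2 * sqrt 7 * s * (c + k)) / 4"
    unfolding torus_point_def f_vector3 a10 norm_divide cmod_w_minus_1 power_divide by simp
qed

lemma torus_point_eq_base_point:
  assumes "cmod \<zeta> = 1" "cmod \<eta> = 1" "0 \<le> Re \<zeta>"
    and "f 0 (torus_point \<zeta> \<eta>) \<le> 0" "f 3 (torus_point \<zeta> \<eta>) \<le> 0" "f 10 (torus_point \<zeta> \<eta>) \<le> 0"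
  shows "\<zeta> = 1 \<and> \<eta> = 1"
proof -
  have "(Re \<zeta>)\<^sup>2 + (Im \<zeta>)\<^sup>2 = 1" "(Re \<eta>)\<^sup>2 + (Im \<eta>)\<^sup>2 = 1"
    using assms(1,2) by (simp_all flip: cmod_power2)
  then have "Re \<zeta> = 1 \<and> Im \<zeta> = 0 \<and> Re \<eta> = 1 \<and> Im \<eta> = 0"
    using assms(3-6) unfolding f_torus_point[OF assms(1,2)]
    by (intro unit_pair_constraints_imp_base) simp_all
  then show ?thesis by (simp add: complex_eq_iff)
qed

lemma torus_point_exists:
  assumes "f 1 (vector [a, b, 1]) = 0" "f 2 (vector [a, b, 1]) = 0"
  obtains \<zeta> \<eta> where "cmod \<zeta> = 1" "cmod \<eta> = 1" "0 \<le> Re \<zeta>" "vector [a, b, 1] = torus_point \<zeta> \<eta>"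
proof -
  define \<zeta> where "\<zeta> = csqrt (- a)"
  define v where "v = - a + (w - 1) * b + 2"
  define \<eta> where "\<eta> = v * cnj \<zeta>"
  have "(cmod a)\<^sup>2 = 1" "(cmod v)\<^sup>2 = 1" using assms unfolding f_vector3 v_def by simp_all
  then have "cmod a = 1" "cmod v = 1"
    using norm_ge_zero[of a] norm_ge_zero[of v] by (auto simp: power2_eq_1_iff)
  then have \<zeta>: "cmod \<zeta> = 1" "\<zeta>\<^sup>2 = - a" "0 \<le> Re \<zeta>"
    using csqrt_principal[of "- a"] unfolding \<zeta>_def by auto
  then have "\<zeta> * \<eta> = v"
    unfolding \<eta>_def by (metis complex_norm_square mult.assoc mult.commute mult.right_neutral of_real_1 power_one)
  moreover have "cmod \<eta> = 1" unfolding \<eta>_def using \<zeta> \<open>cmod v = 1\<close> by (simp add: norm_mult)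
  moreover have "b = (v + a - 2) / (w - 1)" using w_neq_1 unfolding v_def by (simp add: field_simps)
  ultimately have "vector [a, b, 1] = torus_point \<zeta> \<eta>"
    unfolding torus_point_def using \<zeta> by simp
  with \<zeta> \<open>cmod \<eta> = 1\<close> show thesis using that by blast
qed

lemma torus_point_1_1: "torus_point 1 1 = (1/2) *s p2_vec"
  unfolding torus_point_def p2_vec_def scalar_mult_vector3 vector3_eq_iff
  using w_neq_1 by (simp add: field_simps) (use w_squared in algebra)

lemma equidistant_point_eq_p2:
  assumes "Z \<noteq> 0" "f 1 Z = 0" "f 2 Z = 0" "f 0 Z \<le> 0" "f 3 Z \<le> 0" "f 10 Z \<le> 0"
  shows "proj Z = proj p2_vec"
proof -
  obtain a b c where Z: "Z = vector [a, b, c]" using vector3_expand by blast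
  have "c \<noteq> 0"
  proof
    assume "c = 0"
    then have "a = 0" using assms(3) unfolding Z f_vector3 by simp
    then have "b = 0" using assms(2) w_neq_1 \<open>c = 0\<close> unfolding Z f_vector3 by (simp add: norm_mult)
    then show False using assms(1) \<open>a = 0\<close> \<open>c = 0\<close> unfolding Z by (simp add: vector3_eq_0_iff)
  qed
  define V where "V = (1 / c) *s Z"
  have V: "V = vector [a / c, b / c, 1]" unfolding V_def Z scalar_mult_vector3 using \<open>c \<noteq> 0\<close> by simp
  have "0 < (cmod (1 / c))\<^sup>2" using \<open>c \<noteq> 0\<close> by simp
  then have "f 1 V = 0" "f 2 V = 0" "f 0 V \<le> 0" "f 3 V \<le> 0" "f 10 V \<le> 0"
    using assms(2-6) unfolding V_def f_scalar by (simp_all add: mult_nonneg_nonpos)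
  then obtain \<zeta> \<eta> where "cmod \<zeta> = 1" "cmod \<eta> = 1" "0 \<le> Re \<zeta>" and V_torus: "V = torus_point \<zeta> \<eta>"
    unfolding V by (metis torus_point_exists)
  then have "\<zeta> = 1 \<and> \<eta> = 1"
    using \<open>f 0 V \<le> 0\<close> \<open>f 3 V \<le> 0\<close> \<open>f 10 V \<le> 0\<close> by (intro torus_point_eq_base_point) simp_all
  then have "V = (1/2) *s p2_vec" using V_torus torus_point_1_1 by simp
  then have "proj V = proj p2_vec" by (simp add: proj_scalar)
  moreover have "proj V = proj Z" unfolding V_def using \<open>c \<noteq> 0\<close> by (simp add: proj_scalar)
  ultimately show ?thesis by simp
qed

section \<open>Fixed points of \<open>G2\<close> and the sets \<open>F\<^sub>J\<close>\<close>

lemma G2_eigenvector_cases: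
  assumes "G2 *v Z = l *s Z" "Z \<noteq> 0"
  shows "proj Z = proj p2_vec \<or> 0 \<le> Re (herm Z Z)"
proof -
  obtain a b d where Z: "Z = vector [a, b, d]" using vector3_expand by blast
  have eqs: "2 * a + (1 - w) * b - d = l * a" "(- 2 - w) * a - b = l * b" "- a = l * d"
    using assms(1) unfolding Z G2_eq mat3_mult_vector scalar_mult_vector3 vector3_eq_iff by simp_all
  have "d \<noteq> 0"
  proof
    assume "d = 0"
    with eqs have "a = 0" "(1 - w) * b = 0" by simp_all
    then show False using assms(2) w_neq_1 \<open>d = 0\<close> unfolding Z by (simp add: vector3_eq_0_iff)
  qed
  have "d * ((l - 1) * (l * l + 1)) = 0"
    using eqs w_squared by algebra
  moreover have "l * l + 1 = (l - \<i>) * (l + \<i>)"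
    by (simp add: algebra_simps)
  ultimately have "(l - 1) * ((l - \<i>) * (l + \<i>)) = 0" using \<open>d \<noteq> 0\<close> by simp
  then have "l = 1 \<or> l = \<i> \<or> l = - \<i>"
    by (metis add_eq_0_iff2 eq_iff_diff_eq_0 mult_eq_0_iff)
  then consider "l = 1" | "Re l = 0" by auto
  then show ?thesis
  proof cases
    case 1
    have "a = - d" using eqs(3) 1 by algebra
    moreover have "2 * b = (2 + w) * d" using eqs(2) 1 \<open>a = - d\<close> by algebra
    ultimately have "Z = (d / 2) *s p2_vec"
      unfolding Z p2_vec_def scalar_mult_vector3 vector3_eq_iff by (simp add: field_simps)
    then show ?thesis using \<open>d \<noteq> 0\<close> by (simp add: proj_scalar)
  next
    case 2
    have "a = - (l * d)" using eqs(3) by algebra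
    then have "Re (herm Z Z) = (cmod b)\<^sup>2"
      unfolding Z herm_vector3 cmod_power2 using 2 by (simp add: power2_eq_square)
    then show ?thesis by simp
  qed
qed

lemma fixed_points_H2C_G2: "fixed_points_H2C G2 = {proj p2_vec}"
proof (intro set_eqI iffI)
  fix X assume "X \<in> fixed_points_H2C G2"
  then obtain Z where Z: "X = proj Z" "Z \<noteq> 0" "Re (herm Z Z) < 0" "proj (G2 *v Z) = proj Z"
    unfolding fixed_points_H2C_def by auto
  then obtain l where "l \<noteq> 0" "G2 *v Z = l *s Z" using proj_eqD[of Z "G2 *v Z"] by auto
  then show "X \<in> {proj p2_vec}" using G2_eigenvector_cases Z by fastforce
next
  fix X assume "X \<in> {proj p2_vec}"
  moreover have "Re (herm p2_vec p2_vec) < 0" using f0_p2_vec by (simp add: f_def)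
  ultimately show "X \<in> fixed_points_H2C G2"
    unfolding fixed_points_H2C_def using p2_vec_nonzero G2_p2_vec by auto
qed

lemma FJ_subset_FJ_bar:
  assumes "J \<subseteq> J'"
  shows "FJ J' \<subseteq> FJ_bar J"
proof
  fix X assume "X \<in> FJ J'"
  then obtain Z where "X = proj Z" "Z \<noteq> 0" "\<forall>j\<in>J'. f j Z = 0" "\<forall>i\<in>UNIV - J'. f i Z < 0"
    unfolding FJ_def FJK_def by blast
  moreover have "\<forall>i\<in>UNIV - J. f i Z \<le> 0"
    using calculation(3,4) by (metis Diff_iff UNIV_I less_imp_le order_refl)
  ultimately show "X \<in> FJ_bar J"
    using assms unfolding FJ_bar_def FJK_bar_def by blast
qed

lemma FJ_bar_12_subset: "FJ_bar {1, 2} \<subseteq> {proj p2_vec}"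
proof
  fix X assume "X \<in> FJ_bar {1, 2}"
  then obtain Z where "X = proj Z" "Z \<noteq> 0" "f 1 Z = 0" "f 2 Z = 0" "\<And>i. i \<notin> {1, 2} \<Longrightarrow> f i Z \<le> 0"
    unfolding FJ_bar_def FJK_bar_def by auto
  then show "X \<in> {proj p2_vec}" using equidistant_point_eq_p2[of Z] by simp
qed

lemma proj_p2_vec_in_FJ: "proj p2_vec \<in> FJ {1, 2, 3, 5, 10, 11}"
proof -
  have "\<forall>i\<in>UNIV - {1, 2, 3, 5, 10, 11}. f i p2_vec < 0"
    using f_p2_vec_eq_0_iff f_p2_vec_le_0 by (simp add: order.strict_iff_order)
  moreover have "\<forall>j\<in>{1, 2, 3, 5, 10, 11}. f j p2_vec = 0"
    using f_p2_vec_eq_0_iff by blast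
  ultimately show ?thesis
    unfolding FJ_def FJK_def using p2_vec_nonzero by blast
qed

lemma proj_p2_vec_notin_FJ_12: "proj p2_vec \<notin> FJ {1, 2}"
proof
  assume "proj p2_vec \<in> FJ {1, 2}"
  then obtain Z where "proj Z = proj p2_vec" "f 3 Z < 0" unfolding FJ_def FJK_def by auto
  then obtain c where "p2_vec = c *s Z" "c \<noteq> 0" using proj_eqD by blast
  then have "f 3 p2_vec = (cmod c)\<^sup>2 * f 3 Z" "0 < (cmod c)\<^sup>2" using f_scalar[of 3 c Z] by simp_all
  then have "f 3 p2_vec < 0" using \<open>f 3 Z < 0\<close> by (simp add: mult_pos_neg)
  then show False using f_p2_vec_eq_0_iff[of 3] by simp
qed

theorem proposition5p4:
  shows "FJ {1, 2} = {} \<and>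
    (\<exists>p2. fixed_points_H2C G2 = {p2} \<and>
          FJ_bar {1, 2} = FJ {1, 2, 3, 5, 10, 11} \<and> FJ {1, 2, 3, 5, 10, 11} = {p2})"
proof -
  have "FJ {1, 2, 3, 5, 10, 11} \<subseteq> FJ_bar {1, 2}" "FJ {1, 2} \<subseteq> FJ_bar {1, 2}"
    by (simp_all add: FJ_subset_FJ_bar)
  then have "FJ_bar {1, 2} = {proj p2_vec}" "FJ {1, 2, 3, 5, 10, 11} = {proj p2_vec}"
    "FJ {1, 2} = {}"
    using FJ_bar_12_subset proj_p2_vec_in_FJ proj_p2_vec_notin_FJ_12 by blast+
  then show ?thesis using fixed_points_H2C_G2 by auto
qed

end
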